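(* Let $t=(t_1:t_2:t_3)\in C^0(k)$ and let $U_3(\mathbb F_p)=\{A\in\mathrm{GL}_3(\mathbb F_{p^2}):A^TA^{(p)}=\mathbb I_3\}$. Via the map $A\mapsto\alpha_A$ (where $A\cdot t=\alpha_At$): (1) if $t\notin C(\mathbb F_{p^6})$, then $\mathrm{End}(t)\cap U_3(\mathbb F_p)\simeq\{\alpha\in\mathbb F_{p^2}:\alpha^{p+1}=1\}$; (2) if $t\in C(\mathbb F_{p^6})$, then $\mathrm{End}(t)\cap U_3(\mathbb F_p)\simeq\{\alpha\in\mathbb F_{p^6}:\alpha^{p^3+1}=1\}$.
   Context: $k$ is algebraically closed of characteristic $p$, $C\subset\mathbb P^2$ is the Fermat curve $X_1^{p+1}+X_2^{p+1}+X_3^{p+1}=0$, $C^0=C\setminus C(\mathbb F_{p^2})$, $A^{(p)}$ is obtained by raising entries to the $p$-th power, and $\mathrm{End}(t)=\{A\in\mathrm{Mat}_3(\mathbb F_{p^2}):A\cdot t\in k\cdot t\}$ for $t$ viewed as a column vector. *)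

theory Defs
  imports "HOL-Analysis.Analysis" "HOL-Computational_Algebra.Polynomial"
begin

definition alg_closed :: "'k::field itself \<Rightarrow> bool" where
  "alg_closed _ \<longleftrightarrow> (\<forall>q::'k poly. degree q > 0 \<longrightarrow> (\<exists>x. poly q x = 0))"

definition Fq :: "nat \<Rightarrow> nat \<Rightarrow> 'k::field set" where
  "Fq p n = {x. x ^ (p ^ n) = x}"

definition on_fermat :: "nat \<Rightarrow> 'k::field ^ 3 \<Rightarrow> bool" where
  "on_fermat p t \<longleftrightarrow> t \<noteq> 0 \<and> t$1 ^ (p+1) + t$2 ^ (p+1) + t$3 ^ (p+1) = 0"

text \<open>The projective point [t] is defined over the subfield S: some nonzero rescaling of t has
  all coordinates in S.\<close>
definition point_over :: "'k::field set \<Rightarrow> 'k ^ 3 \<Rightarrow> bool" where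
  "point_over S t \<longleftrightarrow> (\<exists>c. c \<noteq> 0 \<and> (\<forall>i. c * t$i \<in> S))"

definition mat_over :: "'k::field set \<Rightarrow> 'k ^ 3 ^ 3 \<Rightarrow> bool" where
  "mat_over S A \<longleftrightarrow> (\<forall>i j. A$i$j \<in> S)"

definition frob_mat :: "nat \<Rightarrow> 'k::field ^ 3 ^ 3 \<Rightarrow> 'k ^ 3 ^ 3" where
  "frob_mat p A = (\<chi> i j. (A$i$j) ^ p)"

definition U3 :: "nat \<Rightarrow> ('k::field ^ 3 ^ 3) set" where
  "U3 p = {A. mat_over (Fq p 2) A \<and> invertible A \<and> transpose A ** frob_mat p A = mat 1}"

definition End_pt :: "nat \<Rightarrow> 'k::field ^ 3 \<Rightarrow> ('k ^ 3 ^ 3) set" where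
  "End_pt p t = {A. mat_over (Fq p 2) A \<and> (\<exists>\<alpha>. A *v t = \<alpha> *s t)}"

text \<open>alpha_A with A t = alpha_A t (well defined for t nonzero).\<close>
definition alpha_of :: "'k::field ^ 3 ^ 3 \<Rightarrow> 'k ^ 3 \<Rightarrow> 'k" where
  "alpha_of A t = (THE \<alpha>. A *v t = \<alpha> *s t)"

end

theory Submission
  imports Defs
begin

text \<open>Write frob_t n for t with all coordinates raised to the power p^n. With the bilinear dot
  product, the Fermat equation says that t is orthogonal to frob_t 1, hence every frob_t n is
  orthogonal to frob_t (n + 1). Since t is not defined over F_(p^2), these relations force
  dot3 t (frob_t 3) \<noteq> 0 and make t, frob_t 2, frob_t 4 a basis. A matrix A over F_(p^2) with
  A t = \<alpha> t has frob_t 2 and frob_t 4 as eigenvectors with eigenvalues \<alpha>^(p^2) and \<alpha>^(p^4), so it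
  is determined by \<alpha>, and unitarity on the pair t, frob_t 2 gives \<alpha>^(p^3 + 1) = 1. If t is not
  defined over F_(p^6), then frob_t 6 is an eigenvector for \<alpha>^(p^6) = \<alpha> off the line of t, which
  forces \<alpha>^(p^2) = \<alpha>, and the scalar matrices realise every such \<alpha>. If t is defined over F_(p^6),
  the matrix with eigenvalues \<alpha>, \<alpha>^(p^2), \<alpha>^(p^4) on the basis is fixed by the p^2-Frobenius and
  unitary for every \<alpha> with \<alpha>^(p^3 + 1) = 1.\<close>

section \<open>Linear algebra in dimension three\<close>

definition dot3 :: "'a::comm_ring_1^3 \<Rightarrow> 'a^3 \<Rightarrow> 'a" where
  "dot3 x y = x$1 * y$1 + x$2 * y$2 + x$3 * y$3"

definition cross_prod :: "'a::comm_ring_1^3 \<Rightarrow> 'a^3 \<Rightarrow> 'a^3" where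
  "cross_prod a b = vector [a$2 * b$3 - a$3 * b$2, a$3 * b$1 - a$1 * b$3, a$1 * b$2 - a$2 * b$1]"

definition triple_prod :: "'a::comm_ring_1^3 \<Rightarrow> 'a^3 \<Rightarrow> 'a^3 \<Rightarrow> 'a" where
  "triple_prod a b c = dot3 (cross_prod a b) c"

lemma vec3_eq_iff: "(x::'a^3) = y \<longleftrightarrow> x$1 = y$1 \<and> x$2 = y$2 \<and> x$3 = y$3"
  by (simp add: vec_eq_iff forall_3)

lemma matrix_vector_mult_3:
  "((A::'a::semiring_1^3^'n) *v x)$i = A$i$1 * x$1 + A$i$2 * x$2 + A$i$3 * x$3"
  by (simp add: matrix_vector_mult_def sum_3)

lemma cross_prod_component [simp]:
  "cross_prod a b $ 1 = a$2 * b$3 - a$3 * b$2"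
  "cross_prod a b $ 2 = a$3 * b$1 - a$1 * b$3"
  "cross_prod a b $ 3 = a$1 * b$2 - a$2 * b$1"
  by (simp_all add: cross_prod_def)

lemma dot3_commute: "dot3 x y = dot3 y x"
  by (simp add: dot3_def algebra_simps)

lemma dot3_diff_right: "dot3 x (y - z) = dot3 x y - dot3 x z"
  by (simp add: dot3_def algebra_simps)

lemma dot3_smult_left: "dot3 (c *s x) y = c * dot3 x y"
  and dot3_smult_right: "dot3 x (c *s y) = c * dot3 x y"
  by (simp_all add: dot3_def algebra_simps)

lemma dot3_matrix_vector_mult: "dot3 (A *v x) y = dot3 x (transpose A *v y)"
  by (simp add: dot3_def matrix_vector_mult_3 transpose_def algebra_simps)

lemma dot3_cross_prod_self:
  "dot3 (cross_prod a b) a = 0" "dot3 (cross_prod a b) b = 0"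
  by (simp_all add: dot3_def algebra_simps)

lemma cross_prod_cross_prod: "cross_prod x (cross_prod a b) = dot3 x b *s a - dot3 x a *s b"
  by (simp add: vec3_eq_iff dot3_def algebra_simps)

lemma triple_prod_rotate:
  "triple_prod b c a = triple_prod a b c" "triple_prod c a b = triple_prod a b c"
  by (simp_all add: triple_prod_def dot3_def algebra_simps)

text \<open>The two forms of Cramer's rule: the dual basis of a, b, c is formed by the cross products,
  scaled by the triple product.\<close>

lemma triple_prod_smult_dual:
  "triple_prod a b c *s r = dot3 r a *s cross_prod b c + dot3 r b *s cross_prod c a + dot3 r c *s cross_prod a b"
  by (simp add: vec3_eq_iff triple_prod_def dot3_def algebra_simps)

lemma triple_prod_smult_expand:
  "triple_prod a b c *s r
     = dot3 (cross_prod b c) r *s a + dot3 (cross_prod c a) r *s b + dot3 (cross_prod a b) r *s c"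
  by (simp add: vec3_eq_iff triple_prod_def dot3_def algebra_simps)

lemma parallel_if_cross_prod_eq_0:
  fixes w x :: "'a::field^3"
  assumes "w \<noteq> 0" and "cross_prod x w = 0"
  shows "\<exists>l. x = l *s w"
proof -
  have e: "x$2 * w$3 = x$3 * w$2" "x$3 * w$1 = x$1 * w$3" "x$1 * w$2 = x$2 * w$1"
    using assms(2) by (simp_all add: vec3_eq_iff)
  obtain i where "w$i \<noteq> 0"
    using assms(1) by (auto simp: vec_eq_iff)
  then have "x = (x$i / w$i) *s w"
    using e exhaust_3[of i] by (auto simp: vec3_eq_iff field_simps)
  then show ?thesis ..
qed

lemma eq_0_if_dot3_basis_eq_0:
  fixes a b c r :: "'a::field^3"
  assumes "triple_prod a b c \<noteq> 0" and "dot3 r a = 0" "dot3 r b = 0" "dot3 r c = 0"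
  shows "r = 0"
proof -
  have "triple_prod a b c *s r = 0"
    using triple_prod_smult_dual[of a b c r] assms(2-) by simp
  with assms(1) show ?thesis
    by (simp add: vec3_eq_iff)
qed

lemma lincomb_coeffs_unique:
  fixes a b c :: "'a::field^3"
  assumes "triple_prod a b c \<noteq> 0"
    and "x *s a + y *s b + z *s c = x' *s a + y' *s b + z' *s c"
  shows "x = x'" "y = y'" "z = z'"
proof -
  have coeff: "dot3 (cross_prod b c) (x *s a + y *s b + z *s c) = x * triple_prod a b c"
    "dot3 (cross_prod c a) (x *s a + y *s b + z *s c) = y * triple_prod a b c"
    "dot3 (cross_prod a b) (x *s a + y *s b + z *s c) = z * triple_prod a b c" for x y z
    by (simp_all add: triple_prod_def dot3_def algebra_simps)
  show "x = x'" "y = y'" "z = z'"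
    using coeff[of x y z] coeff[of x' y' z'] assms by auto
qed

lemma matrix_vector_mult_lincomb3:
  "(A::'a::field^3^3) *v (x *s a + y *s b + z *s c) = x *s (A *v a) + y *s (A *v b) + z *s (A *v c)"
  by (simp add: matrix_vector_right_distrib vector_scalar_commute)

lemma matrix_eq_if_agree_on_basis:
  fixes A B :: "'a::field^3^3"
  assumes "triple_prod a b c \<noteq> 0" and "A *v a = B *v a" "A *v b = B *v b" "A *v c = B *v c"
  shows "A = B"
proof -
  have "triple_prod a b c *s (A *v x) = triple_prod a b c *s (B *v x)" for x
    unfolding vector_scalar_commute[symmetric] triple_prod_smult_expand[of a b c x]
      matrix_vector_mult_lincomb3 assms(2-) ..
  with assms(1) show ?thesis
    by (simp add: matrix_eq vec3_eq_iff)
qed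

lemma ex_matrix_with_eigenbasis:
  fixes a b c :: "'a::field^3"
  assumes "triple_prod a b c \<noteq> 0"
  shows "\<exists>A. A *v a = u *s a \<and> A *v b = v *s b \<and> A *v c = w *s c"
proof -
  define D where "D = triple_prod a b c"
  define A where "A = (\<chi> i j. inverse D * (u * a$i * cross_prod b c $j + v * b$i * cross_prod c a $j
                                + w * c$i * cross_prod a b $j))"
  have A: "A *v x = inverse D *s (u * dot3 (cross_prod b c) x *s a
                     + v * dot3 (cross_prod c a) x *s b + w * dot3 (cross_prod a b) x *s c)" for x
    by (simp add: vec3_eq_iff matrix_vector_mult_3 A_def dot3_def algebra_simps)
  have "dot3 (cross_prod b c) a = D" "dot3 (cross_prod c a) b = D" "dot3 (cross_prod a b) c = D"
    using triple_prod_rotate[of a b c] by (simp_all add: D_def triple_prod_def)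
  moreover have "dot3 (cross_prod c a) a = 0" "dot3 (cross_prod a b) a = 0"
    "dot3 (cross_prod b c) b = 0" "dot3 (cross_prod a b) b = 0"
    "dot3 (cross_prod b c) c = 0" "dot3 (cross_prod c a) c = 0"
    by (simp_all add: dot3_cross_prod_self)
  ultimately show ?thesis
    using assms by (intro exI[of _ A]) (simp add: A D_def vec3_eq_iff)
qed

lemma invertible_if_eigenbasis:
  fixes A :: "'a::field^3^3"
  assumes basis: "triple_prod a b c \<noteq> 0"
    and A: "A *v a = u *s a" "A *v b = v *s b" "A *v c = w *s c"
    and nz: "u \<noteq> 0" "v \<noteq> 0" "w \<noteq> 0"
  shows "invertible A"
proof -
  obtain B where B: "B *v a = inverse u *s a" "B *v b = inverse v *s b" "B *v c = inverse w *s c"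
    using ex_matrix_with_eigenbasis[OF basis] by blast
  have "A ** B = mat 1" "B ** A = mat 1"
    by (rule matrix_eq_if_agree_on_basis[OF basis];
        simp add: matrix_vector_mul_assoc[symmetric] A B vector_scalar_commute nz)+
  then show ?thesis
    unfolding invertible_def by blast
qed

lemma eigenvector_parallel_if_eigenvalue_distinct:
  fixes A :: "'a::field^3^3"
  assumes basis: "triple_prod a b c \<noteq> 0"
    and A: "A *v a = u *s a" "A *v b = v *s b" "A *v c = w *s c" "A *v x = u *s x"
    and "v \<noteq> u" "w \<noteq> u"
  shows "\<exists>l. x = l *s a"
proof -
  define D c0 c1 c2 where "D = triple_prod a b c"
    and "c0 = dot3 (cross_prod b c) x" and "c1 = dot3 (cross_prod c a) x"
    and "c2 = dot3 (cross_prod a b) x"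
  have x: "D *s x = c0 *s a + c1 *s b + c2 *s c"
    unfolding D_def c0_def c1_def c2_def by (rule triple_prod_smult_expand)
  have "(u * c0) *s a + (u * c1) *s b + (u * c2) *s c = u *s (D *s x)"
    by (simp add: x vector_add_ldistrib)
  also have "\<dots> = A *v (D *s x)"
    by (simp add: vector_scalar_commute A(4) mult.commute)
  also have "\<dots> = (c0 * u) *s a + (c1 * v) *s b + (c2 * w) *s c"
    by (simp only: x matrix_vector_mult_lincomb3 A vector_smult_assoc)
  finally have "u * c1 = c1 * v" "u * c2 = c2 * w"
    using lincomb_coeffs_unique[OF basis] by blast+
  with assms(6,7) have "c1 = 0" "c2 = 0"
    by (auto simp: algebra_simps)
  with x have "x = (c0 / D) *s a"
    using basis by (simp add: D_def vec3_eq_iff field_simps)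
  then show ?thesis ..
qed

lemma mat_matrix_vector_mult: "mat a *v (x::'a::comm_semiring_1^'n) = a *s x"
  by (simp add: vec_eq_iff matrix_vector_mult_def mat_def if_distrib if_distribR cong del: if_weak_cong)

lemma alpha_of_eq:
  "(t::'a::field^3) \<noteq> 0 \<Longrightarrow> A *v t = a *s t \<Longrightarrow> alpha_of A t = a"
  unfolding alpha_of_def by (rule the_equality) (auto simp: vec_eq_iff)

section \<open>Frobenius on vectors and matrices\<close>

definition frob_vec :: "nat \<Rightarrow> nat \<Rightarrow> 'a::comm_semiring_1^'n \<Rightarrow> 'a^'n" where
  "frob_vec p n x = (\<chi> i. x$i ^ p^n)"

definition frob_matrix :: "nat \<Rightarrow> nat \<Rightarrow> 'a::comm_semiring_1^'n^'m \<Rightarrow> 'a^'n^'m" where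
  "frob_matrix p n A = (\<chi> i j. A$i$j ^ p^n)"

lemma frob_vec_component [simp]: "frob_vec p n x $ i = x$i ^ p^n"
  by (simp add: frob_vec_def)

lemma frob_matrix_component [simp]: "frob_matrix p n A $ i $ j = A$i$j ^ p^n"
  by (simp add: frob_matrix_def)

lemma frob_mat_eq_frob_matrix: "frob_mat p A = frob_matrix p 1 A"
  by (simp add: frob_mat_def frob_matrix_def)

lemma power_prime_power_power: "((x::'a::comm_semiring_1) ^ p^a) ^ p^b = x ^ p^(a + b)"
  by (simp add: power_mult[symmetric] power_add)

lemma frob_vec_0 [simp]: "frob_vec p 0 x = x"
  by (simp add: vec_eq_iff)

lemma frob_vec_frob_vec: "frob_vec p b (frob_vec p a x) = frob_vec p (a + b) x"
  by (simp add: vec_eq_iff power_prime_power_power)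

lemma frob_vec_smult: "frob_vec p n (c *s x) = c ^ p^n *s frob_vec p n x"
  by (simp add: vec_eq_iff power_mult_distrib)

context
  fixes p :: nat
  assumes prime_p: "prime p" and char_p: "CHAR('a::field) = p"
begin

lemma frobenius_add: "((x::'a) + y) ^ p^n = x ^ p^n + y ^ p^n"
  using freshmans_dream'[of "p^n" n x y] prime_p char_p by simp

lemma frobenius_sum: "(\<Sum>i\<in>I. f i :: 'a) ^ p^n = (\<Sum>i\<in>I. f i ^ p^n)"
  using freshmans_dream_sum'[of "p^n" n f I] prime_p char_p by simp

lemma frobenius_diff: "((x::'a) - y) ^ p^n = x ^ p^n - y ^ p^n"
  using frobenius_add[of "x - y" y n] by (simp add: algebra_simps)

lemma frobenius_inj: "(x::'a) ^ p^n = y ^ p^n \<Longrightarrow> x = y"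
  using frobenius_diff[of x y n] by simp

lemma frob_vec_inj: "frob_vec p n (x::'a^'n) = frob_vec p n y \<Longrightarrow> x = y"
  by (simp add: vec_eq_iff) (meson frobenius_inj)

lemma frob_vec_eq_0_iff [simp]: "frob_vec p n (x::'a^'n) = 0 \<longleftrightarrow> x = 0"
  using prime_p by (simp add: vec_eq_iff prime_gt_0_nat)

lemma dot3_frob_vec: "dot3 (frob_vec p n x) (frob_vec p n (y::'a^3)) = dot3 x y ^ p^n"
  by (simp add: dot3_def frobenius_add power_mult_distrib)

lemma cross_prod_frob_vec:
  "cross_prod (frob_vec p n x) (frob_vec p n (y::'a^3)) = frob_vec p n (cross_prod x y)"
  by (simp add: vec3_eq_iff frobenius_diff power_mult_distrib)

lemma triple_prod_frob_vec:
  "triple_prod (frob_vec p n x) (frob_vec p n y) (frob_vec p n (z::'a^3)) = triple_prod x y z ^ p^n"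
  by (simp add: triple_prod_def cross_prod_frob_vec dot3_frob_vec)

lemma frob_vec_matrix_vector_mult:
  "frob_vec p n ((A::'a^'n^'m) *v x) = frob_matrix p n A *v frob_vec p n x"
  by (simp add: vec_eq_iff matrix_vector_mult_def frobenius_sum power_mult_distrib)

end

lemma alg_closed_ex_root_power:
  assumes "alg_closed TYPE('a::field)" and "m > 0"
  shows "\<exists>x::'a. x ^ m = c"
proof -
  define q :: "'a poly" where "q = [:-c:] + monom 1 m"
  have "degree q = m"
    unfolding q_def using assms(2) by (subst degree_add_eq_right) (auto simp: degree_monom_eq)
  then obtain x where "poly q x = 0"
    using assms unfolding alg_closed_def by auto
  then show ?thesis
    by (auto simp: q_def poly_monom)
qed

lemma frob_vec_parallel_if_point_over:
  assumes "point_over (Fq p n) (t::'a::field^3)"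
  shows "\<exists>l. frob_vec p n t = l *s t"
proof -
  obtain c where c: "c \<noteq> 0" "\<And>i. (c * t$i) ^ p^n = c * t$i"
    using assms by (auto simp: point_over_def Fq_def)
  have "t$i ^ p^n = (c / c ^ p^n) * t$i" for i
    using c(1) c(2)[of i] by (simp add: power_mult_distrib field_simps)
  then show ?thesis
    by (intro exI[of _ "c / c ^ p^n"]) (simp add: vec_eq_iff)
qed

context
  fixes p :: nat
  assumes prime_p: "prime p" and char_p: "CHAR('a::field) = p"
    and alg_closed: "alg_closed TYPE('a)"
begin

lemma parallel_if_frob_vec_parallel:
  assumes "frob_vec p n u = l *s frob_vec p n (v::'a^'n)"
  shows "\<exists>m. u = m *s v"
proof -
  obtain m :: 'a where m: "m ^ p^n = l"
    using alg_closed_ex_root_power[OF alg_closed, of "p^n" l] prime_p by (auto simp: prime_gt_0_nat)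
  have "frob_vec p n u = frob_vec p n (m *s v)"
    using assms by (simp add: frob_vec_smult m)
  then show ?thesis
    using frob_vec_inj[OF prime_p char_p] by blast
qed

text \<open>Rescaling t by a (p^n - 1)-th root of 1/l makes all its coordinates Frobenius-fixed.\<close>

lemma point_over_if_frob_vec_parallel:
  assumes "n > 0" and "(t::'a^3) \<noteq> 0" and t: "frob_vec p n t = l *s t"
  shows "point_over (Fq p n) t"
proof -
  have l: "l \<noteq> 0"
    using assms(2) t frob_vec_eq_0_iff[OF prime_p char_p, of n t] by auto
  have "p ^ n \<ge> 2 ^ n"
    using prime_ge_2_nat[OF prime_p] by (simp add: power_mono)
  moreover have "(2::nat) ^ n \<ge> 2"
    using assms(1) by (cases n) simp_all
  ultimately have q: "p ^ n = Suc (p ^ n - 1)" "p ^ n - 1 > 0"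
    by linarith+
  obtain c :: 'a where c: "c ^ (p ^ n - 1) = inverse l"
    using alg_closed_ex_root_power[OF alg_closed q(2)] by blast
  have c0: "c \<noteq> 0"
    using c l q(2) by (auto simp: zero_power)
  have cp: "c ^ p^n = c * inverse l"
    by (subst q(1)) (simp only: power_Suc c)
  have "(c * t$i) ^ p^n = c * t$i" for i
    using t l by (simp add: vec_eq_iff power_mult_distrib cp)
  then show ?thesis
    using c0 by (auto simp: point_over_def Fq_def)
qed

end

lemma Fq2_power_even: "(x::'a::field) \<in> Fq p 2 \<Longrightarrow> x ^ p^(2 * j) = x"
proof (induction j)
  case (Suc j)
  then show ?case
    using power_prime_power_power[of x p 2 "2 * j"] by (simp add: Fq_def add.commute)
qed simp

lemma frob_matrix_even_if_mat_over_Fq2: "mat_over (Fq p 2) A \<Longrightarrow> frob_matrix p (2 * j) A = A"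
  by (simp add: vec_eq_iff mat_over_def Fq2_power_even)

lemma mat_over_Fq2_if_frob_matrix_fixed: "frob_matrix p 2 A = A \<Longrightarrow> mat_over (Fq p 2) A"
  by (simp add: vec_eq_iff mat_over_def Fq_def)

lemma eigenvector_frob_vec_even:
  fixes A :: "'a::field^3^3"
  assumes "prime p" "CHAR('a) = p" and "mat_over (Fq p 2) A" and "A *v t = a *s t"
  shows "A *v frob_vec p (2 * j) t = a ^ p^(2 * j) *s frob_vec p (2 * j) t"
  using frob_vec_matrix_vector_mult[OF assms(1,2), of "2 * j" A t] assms(3,4)
  by (simp add: frob_matrix_even_if_mat_over_Fq2 frob_vec_smult)

lemma power_prime_power_6_if_norm_1:
  assumes "(a::'a::field) * a ^ p^3 = 1"
  shows "a ^ p^6 = a"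
proof -
  have "a ^ p^3 = inverse a"
    using inverse_unique[OF assms] by simp
  then have "a ^ p^6 = inverse (inverse a)"
    using power_prime_power_power[of a p 3 3] by (simp add: power_inverse)
  then show ?thesis
    by simp
qed

lemma power_prime_power_norm_1:
  assumes "(a::'a::comm_semiring_1) * a ^ p^3 = 1"
  shows "a ^ p^m * a ^ p^(m + 3) = 1"
proof -
  have "(a * a ^ p^3) ^ p^m = 1"
    using assms by simp
  then show ?thesis
    by (simp add: power_mult_distrib power_prime_power_power add.commute)
qed

section \<open>The unitary group as an isometry group\<close>

lemma form_preserved_if_eigenvectors:
  assumes "A *v x = u *s x" and "A *v y = v *s y" and "u * v ^ p = 1 \<or> dot3 x (frob_vec p 1 y) = 0"
  shows "dot3 (A *v x) (frob_vec p 1 (A *v y)) = dot3 x (frob_vec p 1 y)"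
proof -
  have "dot3 (A *v x) (frob_vec p 1 (A *v y)) = u * v ^ p * dot3 x (frob_vec p 1 y)"
    using assms(1,2) by (simp add: frob_vec_smult dot3_smult_left dot3_smult_right mult_ac)
  with assms(3) show ?thesis
    by auto
qed

context
  fixes p :: nat
  assumes prime_p: "prime p" and char_p: "CHAR('a::field) = p"
begin

text \<open>The condition transpose A ** frob_mat p A = mat 1 defining U3 says that A preserves the
  sesquilinear form dot3 x (frob_vec p 1 y).\<close>

lemma dot3_frob_vec_matrix_vector_mult:
  "dot3 ((A::'a^3^3) *v x) (frob_vec p 1 (A *v y))
     = dot3 x ((transpose A ** frob_matrix p 1 A) *v frob_vec p 1 y)"
  by (simp only: frob_vec_matrix_vector_mult[OF prime_p char_p] dot3_matrix_vector_mult
      matrix_vector_mul_assoc)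

lemma unitary_preserves_form:
  assumes "transpose A ** frob_mat p A = mat 1"
  shows "dot3 ((A::'a^3^3) *v x) (frob_vec p 1 (A *v y)) = dot3 x (frob_vec p 1 y)"
  using assms dot3_frob_vec_matrix_vector_mult[of A x y] by (simp add: frob_mat_eq_frob_matrix)

lemma unitary_if_preserves_form_on_basis:
  fixes A :: "'a^3^3"
  assumes basis: "triple_prod a b c \<noteq> 0"
    and preserves: "\<And>x y. x \<in> {a, b, c} \<Longrightarrow> y \<in> {a, b, c} \<Longrightarrow>
                       dot3 (A *v x) (frob_vec p 1 (A *v y)) = dot3 x (frob_vec p 1 y)"
  shows "transpose A ** frob_mat p A = mat 1"
proof -
  let ?M = "transpose A ** frob_matrix p 1 A"
  have fixed: "?M *v frob_vec p 1 y = frob_vec p 1 y" if y: "y \<in> {a, b, c}" for y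
  proof -
    have "dot3 (?M *v frob_vec p 1 y - frob_vec p 1 y) x = 0" if "x \<in> {a, b, c}" for x
      using preserves[OF that y] dot3_frob_vec_matrix_vector_mult[of A x y]
      by (simp add: dot3_commute[of _ x] dot3_diff_right)
    then have "?M *v frob_vec p 1 y - frob_vec p 1 y = 0"
      by (intro eq_0_if_dot3_basis_eq_0[OF basis]) auto
    then show ?thesis
      by simp
  qed
  have "triple_prod (frob_vec p 1 a) (frob_vec p 1 b) (frob_vec p 1 c) \<noteq> 0"
    using basis by (simp add: triple_prod_frob_vec[OF prime_p char_p])
  then have "?M = mat 1"
    by (rule matrix_eq_if_agree_on_basis) (use fixed[of a] fixed[of b] fixed[of c] in simp_all)
  then show ?thesis
    by (simp add: frob_mat_eq_frob_matrix)
qed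

lemma frob_matrix_fixed_if_eigenbasis_cycle:
  fixes A :: "'a^3^3"
  assumes basis: "triple_prod a b c \<noteq> 0" and "l \<noteq> 0"
    and frob: "frob_vec p n a = b" "frob_vec p n b = c" "frob_vec p n c = l *s a"
    and A: "A *v a = u *s a" "A *v b = u ^ p^n *s b" "A *v c = u ^ p^(2 * n) *s c"
    and u: "u ^ p^(3 * n) = u"
  shows "frob_matrix p n A = A"
proof (rule matrix_eq_if_agree_on_basis[OF basis])
  have img: "frob_matrix p n A *v frob_vec p n x = frob_vec p n (A *v x)" for x
    by (simp add: frob_vec_matrix_vector_mult[OF prime_p char_p])
  have "l *s (frob_matrix p n A *v a) = l *s (A *v a)"
    using img[of c] u
    by (simp add: A frob frob_vec_smult vector_scalar_commute power_prime_power_power mult_2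
        mult.commute add.commute)
  then show "frob_matrix p n A *v a = A *v a"
    using \<open>l \<noteq> 0\<close> by (simp add: vec3_eq_iff)
  show "frob_matrix p n A *v b = A *v b"
    using img[of a] by (simp add: A frob frob_vec_smult)
  show "frob_matrix p n A *v c = A *v c"
    using img[of b] by (simp add: A frob frob_vec_smult power_prime_power_power mult_2)
qed

end

section \<open>Points of the Fermat curve\<close>

locale fermat_point =
  fixes p :: nat and t :: "'k::field^3"
  assumes prime_p: "prime p" and char_p: "CHAR('k) = p" and alg_closed: "alg_closed TYPE('k)"
    and on_fermat: "on_fermat p t" and not_over_Fq2: "\<not> point_over (Fq p 2) t"
begin

abbreviation frob_t :: "nat \<Rightarrow> 'k^3" where
  "frob_t n \<equiv> frob_vec p n t"

lemma t_nonzero: "t \<noteq> 0"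
  using on_fermat by (simp add: on_fermat_def)

lemma frob_t_nonzero: "frob_t n \<noteq> 0"
  using t_nonzero by (simp add: frob_vec_eq_0_iff[OF prime_p char_p])

text \<open>The Fermat equation is dot3 t (frob_t 1) = 0; Frobenius transports it to all consecutive
  conjugates.\<close>

lemma dot3_frob_t_adjacent:
  assumes "m = n + 1 \<or> n = m + 1"
  shows "dot3 (frob_t m) (frob_t n) = 0"
proof -
  have "dot3 t (frob_t 1) = 0"
    using on_fermat by (simp add: on_fermat_def dot3_def)
  then have "dot3 (frob_t k) (frob_t (k + 1)) = 0" for k
    using dot3_frob_vec[OF prime_p char_p, of k t "frob_t 1"] prime_p
    by (simp add: frob_vec_frob_vec prime_gt_0_nat add.commute)
  with assms show ?thesis
    using dot3_commute by metis
qed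

lemma frob_t2_not_parallel: "frob_t 2 \<noteq> l *s t"
  using point_over_if_frob_vec_parallel[OF prime_p char_p alg_closed, of 2 t l]
    t_nonzero not_over_Fq2 by auto

lemma cross_prod_t_frob_t2_nonzero: "cross_prod t (frob_t 2) \<noteq> 0"
proof
  assume "cross_prod t (frob_t 2) = 0"
  then have "cross_prod (frob_t 2) t = 0"
    by (simp add: vec3_eq_iff algebra_simps)
  then show False
    using parallel_if_cross_prod_eq_0[OF t_nonzero] frob_t2_not_parallel by blast
qed

lemma parallel_cross_prod_if_orth:
  assumes "dot3 x t = 0" and "dot3 x (frob_t 2) = 0"
  shows "\<exists>l. x = l *s cross_prod t (frob_t 2)"
  using assms
  by (intro parallel_if_cross_prod_eq_0[OF cross_prod_t_frob_t2_nonzero])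
    (simp add: cross_prod_cross_prod)

lemma frob_t1_parallel_cross_prod: "\<exists>l. frob_t 1 = l *s cross_prod t (frob_t 2)"
  using dot3_frob_t_adjacent[of 1 0] dot3_frob_t_adjacent[of 1 2]
  by (intro parallel_cross_prod_if_orth) simp_all

text \<open>If dot3 t (frob_t 3) = 0, then frob_t 1 and frob_t 3 are both orthogonal to t and frob_t 2,
  so both lie on the line of their cross product, and undoing one Frobenius would make frob_t 2
  proportional to t.\<close>

lemma dot3_t_frob_t3_nonzero: "dot3 t (frob_t 3) \<noteq> 0"
proof
  assume "dot3 t (frob_t 3) = 0"
  then have "\<exists>m. frob_t 3 = m *s cross_prod t (frob_t 2)"
    using dot3_frob_t_adjacent[of 3 2]
    by (intro parallel_cross_prod_if_orth) (simp_all add: dot3_commute)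
  then obtain m where m: "frob_t 3 = m *s cross_prod t (frob_t 2)" ..
  obtain l where l: "frob_t 1 = l *s cross_prod t (frob_t 2)"
    using frob_t1_parallel_cross_prod by blast
  have "l \<noteq> 0"
    using l frob_t_nonzero[of 1] by auto
  with l m have "frob_vec p 1 (frob_t 2) = (m / l) *s frob_vec p 1 t"
    by (simp add: frob_vec_frob_vec)
  then obtain k where "frob_t 2 = k *s t"
    using parallel_if_frob_vec_parallel[OF prime_p char_p alg_closed] by blast
  with frob_t2_not_parallel show False
    by blast
qed

lemma triple_prod_frob_t_basis: "triple_prod t (frob_t 2) (frob_t 4) \<noteq> 0"
proof
  assume degenerate: "triple_prod t (frob_t 2) (frob_t 4) = 0"
  obtain l where l: "frob_t 1 = l *s cross_prod t (frob_t 2)"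
    using frob_t1_parallel_cross_prod by blast
  have "dot3 t (frob_t 3) ^ p = dot3 (frob_vec p 1 t) (frob_vec p 1 (frob_t 3))"
    by (simp add: dot3_frob_vec[OF prime_p char_p])
  also have "\<dots> = l * triple_prod t (frob_t 2) (frob_t 4)"
    unfolding l frob_vec_frob_vec by (simp add: triple_prod_def dot3_smult_left)
  finally show False
    using degenerate dot3_t_frob_t3_nonzero by simp
qed

lemma End_pt_eigenvector: "A \<in> End_pt p t \<Longrightarrow> A *v t = alpha_of A t *s t"
  using alpha_of_eq[OF t_nonzero] by (auto simp: End_pt_def)

lemma End_pt_eigenvector_frob_t:
  assumes "A \<in> End_pt p t"
  shows "A *v frob_t (2 * j) = alpha_of A t ^ p^(2 * j) *s frob_t (2 * j)"
  using assms eigenvector_frob_vec_even[OF prime_p char_p _ End_pt_eigenvector[OF assms]]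
  by (simp add: End_pt_def)

lemma End_pt_eigenbasis:
  assumes "A \<in> End_pt p t"
  shows "A *v t = alpha_of A t *s t"
    and "A *v frob_t 2 = alpha_of A t ^ p^2 *s frob_t 2"
    and "A *v frob_t 4 = alpha_of A t ^ p^4 *s frob_t 4"
    and "A *v frob_t 6 = alpha_of A t ^ p^6 *s frob_t 6"
  using End_pt_eigenvector[OF assms] End_pt_eigenvector_frob_t[OF assms, of 1]
    End_pt_eigenvector_frob_t[OF assms, of 2] End_pt_eigenvector_frob_t[OF assms, of 3]
  by simp_all

lemma alpha_of_mult:
  assumes "A \<in> End_pt p t" and "B \<in> End_pt p t"
  shows "alpha_of (A ** B) t = alpha_of A t * alpha_of B t"
proof (rule alpha_of_eq[OF t_nonzero])
  show "(A ** B) *v t = (alpha_of A t * alpha_of B t) *s t"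
    by (simp add: matrix_vector_mul_assoc[symmetric] End_pt_eigenvector assms
        vector_scalar_commute mult.commute)
qed

lemma inj_on_alpha_of: "inj_on (\<lambda>A. alpha_of A t) (End_pt p t)"
proof (rule inj_onI)
  fix A B assume "A \<in> End_pt p t" "B \<in> End_pt p t" "alpha_of A t = alpha_of B t"
  then show "A = B"
    by (intro matrix_eq_if_agree_on_basis[OF triple_prod_frob_t_basis])
      (simp_all add: End_pt_eigenbasis)
qed

text \<open>Unitarity applied to t and frob_t 2, whose form value dot3 t (frob_t 3) is nonzero.\<close>

lemma alpha_of_norm:
  assumes "A \<in> End_pt p t \<inter> U3 p"
  shows "alpha_of A t * alpha_of A t ^ p^3 = 1"
proof -
  let ?a = "alpha_of A t"
  have "dot3 t (frob_t 3) = dot3 (A *v t) (frob_vec p 1 (A *v frob_t 2))"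
    using assms unitary_preserves_form[OF prime_p char_p, of A t "frob_t 2"]
    by (simp add: U3_def frob_vec_frob_vec)
  also have "\<dots> = ?a * ?a ^ p^3 * dot3 t (frob_t 3)"
    using assms power_prime_power_power[of ?a p 2 1]
    by (simp add: End_pt_eigenbasis frob_vec_smult dot3_smult_left dot3_smult_right
        frob_vec_frob_vec)
  finally show ?thesis
    using dot3_t_frob_t3_nonzero by (metis mult_cancel_right2)
qed

lemma alpha_of_in_Fq2_if_not_over_Fq6:
  assumes "\<not> point_over (Fq p 6) t" and A: "A \<in> End_pt p t \<inter> U3 p"
  shows "alpha_of A t \<in> Fq p 2"
proof (rule ccontr)
  let ?a = "alpha_of A t"
  assume "?a \<notin> Fq p 2"
  then have ne2: "?a ^ p^2 \<noteq> ?a"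
    by (simp add: Fq_def)
  have a6: "?a ^ p^6 = ?a"
    by (rule power_prime_power_6_if_norm_1[OF alpha_of_norm[OF A]])
  have ne4: "?a ^ p^4 \<noteq> ?a"
  proof
    assume "?a ^ p^4 = ?a"
    then have "?a ^ p^6 = ?a ^ p^2"
      using power_prime_power_power[of ?a p 4 2] by simp
    with a6 ne2 show False
      by simp
  qed
  have "A \<in> End_pt p t"
    using A by simp
  then obtain l where "frob_t 6 = l *s t"
    using eigenvector_parallel_if_eigenvalue_distinct[OF triple_prod_frob_t_basis
        End_pt_eigenbasis(1-3) _ ne2 ne4] End_pt_eigenbasis(4) a6 by metis
  then have "point_over (Fq p 6) t"
    using point_over_if_frob_vec_parallel[OF prime_p char_p alg_closed] t_nonzero by simp
  with assms(1) show False
    by blast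
qed

lemma scalar_mat_in_End_U3:
  assumes "a \<in> Fq p 2" and "a ^ (p + 1) = 1"
  shows "mat a \<in> End_pt p t \<inter> U3 p" and "alpha_of (mat a) t = a"
proof -
  have a: "a ^ p^2 = a" "a * a ^ p = 1" "a \<noteq> 0"
    using assms by (auto simp: Fq_def mult.commute)
  have eigen: "mat a *v x = a *s x" for x :: "'k^3"
    by (rule mat_matrix_vector_mult)
  have "mat_over (Fq p 2) (mat a :: 'k^3^3)"
    using a(1) prime_p by (simp add: mat_over_def mat_def Fq_def prime_gt_0_nat)
  moreover have "invertible (mat a :: 'k^3^3)"
    using invertible_if_eigenbasis[OF triple_prod_frob_t_basis eigen eigen eigen] a(3) by blast
  moreover have "transpose (mat a) ** frob_mat p (mat a) = (mat 1 :: 'k^3^3)"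
    using a(2)
    by (intro unitary_if_preserves_form_on_basis[OF prime_p char_p triple_prod_frob_t_basis]
        form_preserved_if_eigenvectors[OF eigen eigen]) simp
  ultimately show "mat a \<in> End_pt p t \<inter> U3 p"
    by (auto simp: End_pt_def U3_def eigen)
  show "alpha_of (mat a) t = a"
    by (rule alpha_of_eq[OF t_nonzero eigen])
qed

text \<open>When frob_t 6 is proportional to t, the matrix with eigenvalues a, a^(p^2), a^(p^4) on the
  basis t, frob_t 2, frob_t 4 commutes with p^2-Frobenius. The form dot3 x (frob_vec p 1 y) on
  this basis vanishes except on pairs whose indices differ by 3 modulo 6, and there the eigenvalue
  factor is a Frobenius conjugate of a^(p^3 + 1) = 1.\<close>

lemma ex_End_U3_with_alpha_if_over_Fq6:
  assumes over: "point_over (Fq p 6) t" and a: "a \<in> Fq p 6" "a ^ (p^3 + 1) = 1"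
  shows "\<exists>A \<in> End_pt p t \<inter> U3 p. alpha_of A t = a"
proof -
  have norm: "a * a ^ p^3 = 1"
    using a(2) by (simp add: mult.commute)
  have a0: "a \<noteq> 0"
    using norm by auto
  obtain l where l: "frob_t 6 = l *s t"
    using frob_vec_parallel_if_point_over[OF over] by blast
  have l0: "l \<noteq> 0"
    using l frob_t_nonzero[of 6] by auto
  obtain A where A: "A *v t = a *s t" "A *v frob_t 2 = a ^ p^2 *s frob_t 2"
      "A *v frob_t 4 = a ^ p^4 *s frob_t 4"
    using ex_matrix_with_eigenbasis[OF triple_prod_frob_t_basis] by blast
  have "frob_matrix p 2 A = A"
    using A a(1) l
    by (intro frob_matrix_fixed_if_eigenbasis_cycle[OF prime_p char_p triple_prod_frob_t_basis l0])
      (simp_all add: frob_vec_frob_vec Fq_def)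
  then have "mat_over (Fq p 2) A"
    by (rule mat_over_Fq2_if_frob_matrix_fixed)
  moreover have "invertible A"
    using a0 by (intro invertible_if_eigenbasis[OF triple_prod_frob_t_basis A]) simp_all
  moreover have "transpose A ** frob_mat p A = mat 1"
  proof (rule unitary_if_preserves_form_on_basis[OF prime_p char_p triple_prod_frob_t_basis])
    have "dot3 t (frob_t 5) ^ p = dot3 (frob_t 1) (frob_t 6)"
      using dot3_frob_vec[OF prime_p char_p, of 1 t "frob_t 5"] by (simp add: frob_vec_frob_vec)
    also have "\<dots> = 0"
      using dot3_frob_t_adjacent[of 1 0] by (simp add: l dot3_smult_right)
    finally have z05: "dot3 t (frob_t 5) = 0"
      using prime_p by (simp add: prime_gt_0_nat)
    have c: "a ^ p^m * a ^ p^(m + 3) = 1" for m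
      by (rule power_prime_power_norm_1[OF norm])
    have norms: "a * (a ^ p^2) ^ p = 1" "a ^ p^2 * (a ^ p^4) ^ p = 1" "a ^ p^4 * a ^ p = 1"
      using c[of 0] c[of 2] c[of 1] power_prime_power_power[of a p 2 1]
        power_prime_power_power[of a p 4 1] by (simp_all add: mult.commute)
    have orth: "dot3 t (frob_vec p 1 t) = 0" "dot3 (frob_t 2) (frob_vec p 1 t) = 0"
      "dot3 (frob_t 2) (frob_vec p 1 (frob_t 2)) = 0" "dot3 (frob_t 4) (frob_vec p 1 (frob_t 2)) = 0"
      "dot3 (frob_t 4) (frob_vec p 1 (frob_t 4)) = 0" "dot3 t (frob_vec p 1 (frob_t 4)) = 0"
      using dot3_frob_t_adjacent[of 0 1] dot3_frob_t_adjacent[of 2 1] dot3_frob_t_adjacent[of 2 3]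
        dot3_frob_t_adjacent[of 4 3] dot3_frob_t_adjacent[of 4 5] z05
      by (simp_all add: frob_vec_frob_vec)
    show "dot3 (A *v x) (frob_vec p 1 (A *v y)) = dot3 x (frob_vec p 1 y)"
      if "x \<in> {t, frob_t 2, frob_t 4}" "y \<in> {t, frob_t 2, frob_t 4}" for x y
      using that by (elim insertE emptyE) (blast intro: form_preserved_if_eigenvectors A norms orth)+
  qed
  ultimately have "A \<in> End_pt p t \<inter> U3 p"
    using A(1) by (auto simp: End_pt_def U3_def)
  moreover have "alpha_of A t = a"
    by (rule alpha_of_eq[OF t_nonzero A(1)])
  ultimately show ?thesis
    by blast
qed

lemma bij_betw_alpha_of_if_not_over_Fq6:
  assumes "\<not> point_over (Fq p 6) t"
  shows "bij_betw (\<lambda>A. alpha_of A t) (End_pt p t \<inter> U3 p) {\<alpha> \<in> Fq p 2. \<alpha> ^ (p + 1) = 1}"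
  unfolding bij_betw_def
proof (intro conjI subset_antisym subsetI)
  show "inj_on (\<lambda>A. alpha_of A t) (End_pt p t \<inter> U3 p)"
    using inj_on_alpha_of by (rule inj_on_subset) blast
next
  fix a :: 'k assume "a \<in> (\<lambda>A. alpha_of A t) ` (End_pt p t \<inter> U3 p)"
  then obtain A where A: "A \<in> End_pt p t \<inter> U3 p" and a: "a = alpha_of A t"
    by blast
  have "a \<in> Fq p 2"
    using alpha_of_in_Fq2_if_not_over_Fq6[OF assms A] a by simp
  moreover have "a ^ p^3 = a ^ p"
    using \<open>a \<in> Fq p 2\<close> power_prime_power_power[of a p 2 1] by (simp add: Fq_def)
  ultimately show "a \<in> {\<alpha> \<in> Fq p 2. \<alpha> ^ (p + 1) = 1}"
    using alpha_of_norm[OF A] a by (simp add: mult.commute)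
next
  fix a :: 'k assume "a \<in> {\<alpha> \<in> Fq p 2. \<alpha> ^ (p + 1) = 1}"
  then show "a \<in> (\<lambda>A. alpha_of A t) ` (End_pt p t \<inter> U3 p)"
    using scalar_mat_in_End_U3 by (metis (mono_tags, lifting) image_eqI mem_Collect_eq)
qed

lemma bij_betw_alpha_of_if_over_Fq6:
  assumes "point_over (Fq p 6) t"
  shows "bij_betw (\<lambda>A. alpha_of A t) (End_pt p t \<inter> U3 p) {\<alpha> \<in> Fq p 6. \<alpha> ^ (p^3 + 1) = 1}"
  unfolding bij_betw_def
proof (intro conjI subset_antisym subsetI)
  show "inj_on (\<lambda>A. alpha_of A t) (End_pt p t \<inter> U3 p)"
    using inj_on_alpha_of by (rule inj_on_subset) blast
next
  fix a :: 'k assume "a \<in> (\<lambda>A. alpha_of A t) ` (End_pt p t \<inter> U3 p)"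
  then obtain A where A: "A \<in> End_pt p t \<inter> U3 p" and a: "a = alpha_of A t"
    by blast
  then have "a * a ^ p^3 = 1"
    using alpha_of_norm by blast
  then show "a \<in> {\<alpha> \<in> Fq p 6. \<alpha> ^ (p^3 + 1) = 1}"
    using power_prime_power_6_if_norm_1 by (simp add: Fq_def mult.commute)
next
  fix a :: 'k assume "a \<in> {\<alpha> \<in> Fq p 6. \<alpha> ^ (p^3 + 1) = 1}"
  then show "a \<in> (\<lambda>A. alpha_of A t) ` (End_pt p t \<inter> U3 p)"
    using ex_End_U3_with_alpha_if_over_Fq6[OF assms] by (metis (mono_tags, lifting) image_eqI mem_Collect_eq)
qed

end

theorem lemma5p10:
  fixes p :: nat and t :: "'k::field ^ 3"
  assumes "prime p" and "CHAR('k) = p" and "alg_closed TYPE('k)"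
    and "on_fermat p t" and "\<not> point_over (Fq p 2) t"
  shows "(\<forall>A\<in>End_pt p t \<inter> U3 p. \<forall>B\<in>End_pt p t \<inter> U3 p.
            alpha_of (A ** B) t = alpha_of A t * alpha_of B t)
    \<and> (\<not> point_over (Fq p 6) t \<longrightarrow>
         bij_betw (\<lambda>A. alpha_of A t) (End_pt p t \<inter> U3 p) {\<alpha> \<in> Fq p 2. \<alpha> ^ (p + 1) = 1})
    \<and> (point_over (Fq p 6) t \<longrightarrow>
         bij_betw (\<lambda>A. alpha_of A t) (End_pt p t \<inter> U3 p) {\<alpha> \<in> Fq p 6. \<alpha> ^ (p ^ 3 + 1) = 1})"
proof -
  interpret fermat_point p t
    using assms by unfold_locales
  show ?thesis
    using alpha_of_mult bij_betw_alpha_of_if_not_over_Fq6 bij_betw_alpha_of_if_over_Fq6 by blast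
qed

end
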